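(* Let $\mathbb{K}$ be a field, $S=\mathbb{K}[x_1,\ldots,x_n]$, and let $I\subseteq S$ be a support-$2$ monomial ideal whose irreducible decomposition is minimal. If $\alpha_{i,j}\geq 2$ for some $1\le i,j\le n$, then $I^{(2)}\neq I^2$.
   Context: For a monomial ideal $I$, $\mathcal{G}(I)$ denotes its minimal set of monomial generators. $I$ is a support-$2$ monomial ideal if $\mathcal{G}(I)\subseteq\{x_i^ax_j^b : 1\le i<j\le n,\ a,b\ge 1\}$. For $i\neq j$, $\alpha_{i,j}$ is the number of elements of $\mathcal{G}(I)$ whose support is exactly $\{x_i,x_j\}$. Symbolic power: $I^{(s)}=\bigcap_{P\in\mathrm{MinAss}(I)}(I^sS_P\cap S)$ over the minimal primes of $I$. Irreducible monomial ideals are those generated by pure powers of variables; every monomial ideal has a unique irredundant decomposition $I=\bigcap Q_i$ into irreducible monomial ideals, called minimal if $\sqrt{Q_i}\ne\sqrt{Q_j}$ for $i\neq j$. *)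

theory Defs
  imports Main "HOL-Library.Poly_Mapping"
begin

text \<open>Polynomial ring S = K[x_v : v in 'v] (with 'v a finite type, n = CARD('v)) is
  the type (v-indexed monomials to coefficients): finitely supported maps from exponent
  vectors (monomials) to coefficients, with convolution product.\<close>

type_synonym ('v, 'a) mpoly = "('v \<Rightarrow>\<^sub>0 nat) \<Rightarrow>\<^sub>0 'a"

definition is_ideal :: "'r::comm_ring_1 set \<Rightarrow> bool" where
  "is_ideal I \<longleftrightarrow> 0 \<in> I \<and> (\<forall>a\<in>I. \<forall>b\<in>I. a + b \<in> I) \<and> (\<forall>r. \<forall>a\<in>I. r * a \<in> I)"

definition ideal_gen :: "'r::comm_ring_1 set \<Rightarrow> 'r set" where
  "ideal_gen G = \<Inter>{J. is_ideal J \<and> G \<subseteq> J}"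

definition ideal_prod :: "'r::comm_ring_1 set \<Rightarrow> 'r set \<Rightarrow> 'r set" where
  "ideal_prod I J = ideal_gen {a * b | a b. a \<in> I \<and> b \<in> J}"

fun ideal_pow :: "'r::comm_ring_1 set \<Rightarrow> nat \<Rightarrow> 'r set" where
  "ideal_pow I 0 = UNIV"
| "ideal_pow I (Suc k) = ideal_prod I (ideal_pow I k)"

definition prime_ideal :: "'r::comm_ring_1 set \<Rightarrow> bool" where
  "prime_ideal P \<longleftrightarrow> is_ideal P \<and> P \<noteq> UNIV \<and> (\<forall>a b. a * b \<in> P \<longrightarrow> a \<in> P \<or> b \<in> P)"

definition radical :: "'r::comm_ring_1 set \<Rightarrow> 'r set" where
  "radical I = {f. \<exists>k. f ^ k \<in> I}"

definition min_primes :: "'r::comm_ring_1 set \<Rightarrow> 'r set set" where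
  "min_primes I = {P. prime_ideal P \<and> I \<subseteq> P \<and>
      (\<forall>Q. prime_ideal Q \<and> I \<subseteq> Q \<and> Q \<subseteq> P \<longrightarrow> Q = P)}"

text \<open>Contraction to S of the extension of I to the localization S_P at a prime P:
  I S_P \<inter> S = {f. \<exists>g \<notin> P. g f \<in> I}.\<close>
definition loc_contr :: "'r::comm_ring_1 set \<Rightarrow> 'r set \<Rightarrow> 'r set" where
  "loc_contr I P = {f. \<exists>g. g \<notin> P \<and> g * f \<in> I}"

definition symbolic_power :: "'r::comm_ring_1 set \<Rightarrow> nat \<Rightarrow> 'r set" where
  "symbolic_power I s = (\<Inter>P\<in>min_primes I. loc_contr (ideal_pow I s) P)"

definition mon :: "('v \<Rightarrow>\<^sub>0 nat) \<Rightarrow> ('v, 'a::field) mpoly" where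
  "mon m = Poly_Mapping.single m 1"

definition mdvd :: "('v \<Rightarrow>\<^sub>0 nat) \<Rightarrow> ('v \<Rightarrow>\<^sub>0 nat) \<Rightarrow> bool" where
  "mdvd m m' \<longleftrightarrow> (\<forall>i. Poly_Mapping.lookup m i \<le> Poly_Mapping.lookup m' i)"

definition monomial_ideal :: "('v, 'a::field) mpoly set \<Rightarrow> bool" where
  "monomial_ideal I \<longleftrightarrow> (\<exists>M. I = ideal_gen (mon ` M))"

definition min_gens :: "('v, 'a::field) mpoly set \<Rightarrow> ('v \<Rightarrow>\<^sub>0 nat) set" where
  "min_gens I = {m. (mon m :: ('v,'a) mpoly) \<in> I \<and>
      \<not> (\<exists>m'. (mon m' :: ('v,'a) mpoly) \<in> I \<and> mdvd m' m \<and> m' \<noteq> m)}"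

definition support2 :: "('v, 'a::field) mpoly set \<Rightarrow> bool" where
  "support2 I \<longleftrightarrow> monomial_ideal I \<and>
     (\<forall>m \<in> min_gens I. \<exists>i j. i \<noteq> j \<and> Poly_Mapping.keys m = {i, j})"

definition alpha :: "('v, 'a::field) mpoly set \<Rightarrow> 'v \<Rightarrow> 'v \<Rightarrow> nat" where
  "alpha I i j = card {m \<in> min_gens I. Poly_Mapping.keys m = {i, j}}"

definition irreducible_monomial_ideal :: "('v, 'a::field) mpoly set \<Rightarrow> bool" where
  "irreducible_monomial_ideal Q \<longleftrightarrow> (\<exists>A e. A \<noteq> {} \<and> (\<forall>i\<in>A. e i \<ge> (1::nat)) \<and>
      Q = ideal_gen ((\<lambda>i. mon (Poly_Mapping.single i (e i))) ` A))"

definition irred_decomp :: "('v, 'a::field) mpoly set \<Rightarrow> ('v, 'a) mpoly set set \<Rightarrow> bool" where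
  "irred_decomp I D \<longleftrightarrow> finite D \<and> (\<forall>Q\<in>D. irreducible_monomial_ideal Q) \<and>
      I = \<Inter>D \<and> (\<forall>Q\<in>D. \<Inter>(D - {Q}) \<noteq> I)"

text \<open>The (unique) irredundant irreducible decomposition of I is minimal:
  distinct components have distinct radicals.\<close>
definition minimal_irred_decomp :: "('v, 'a::field) mpoly set \<Rightarrow> bool" where
  "minimal_irred_decomp I \<longleftrightarrow> (\<forall>D. irred_decomp I D \<longrightarrow>
      (\<forall>Q1\<in>D. \<forall>Q2\<in>D. Q1 \<noteq> Q2 \<longrightarrow> radical Q1 \<noteq> radical Q2))"

end

theory Submission
  imports Defs "HOL-Library.FuncSet"
begin

text \<open>
  The minimal primes of \<open>I\<close> are the ideals \<open>P\<^sub>V = (x\<^sub>k : k \<in> V)\<close> for the minimal vertex covers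
  \<open>V\<close> of the graph formed by the supports of the minimal generators, and \<open>I\<^sup>2 S\<^bsub>P\<^sub>V\<^esub> \<inter> S\<close> is
  obtained from \<open>I\<^sup>2\<close> by setting the variables outside \<open>V\<close> to \<open>1\<close>. For \<open>x \<in> V\<close> let the exit
  exponent \<open>p\<^sub>V(x)\<close> be the least exponent of \<open>x\<close> in a minimal generator \<open>x\<^sup>p y\<^sup>c\<close> with \<open>y \<notin> V\<close>.
  Minimality of the irreducible decomposition makes the component \<open>(x\<^sub>k\<^bsup>e\<^sub>k\<^esup> : k \<in> V)\<close> with support
  \<open>V\<close> unique, and therefore \<open>e\<^sub>x \<ge> p\<^sub>V(x)\<close>. Since this component contains \<open>I\<close>, we get a staircase
  property: every generator \<open>x\<^sub>i\<^sup>a x\<^sub>j\<^sup>b\<close> with \<open>i, j \<in> V\<close> has \<open>a \<ge> p\<^sub>V(x\<^sub>i)\<close> or \<open>b \<ge> p\<^sub>V(x\<^sub>j)\<close>.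

  Let \<open>x\<^sub>i\<^sup>a x\<^sub>j\<^sup>b\<close> be the generator supported on \<open>{x\<^sub>i, x\<^sub>j}\<close> with least \<open>b\<close>; since there are at
  least two of them, another one has \<open>x\<^sub>i\<close>-exponent below \<open>a\<close>. The witness is
  \<open>x\<^sub>i\<^bsup>2a-1\<^esup> x\<^sub>j\<^sup>v\<close>, where \<open>v\<close> is the maximum of \<open>2b\<close> and of \<open>p\<^sub>V(x\<^sub>j)\<close> over the covers
  \<open>V \<ni> x\<^sub>i, x\<^sub>j\<close> with \<open>p\<^sub>V(x\<^sub>i) \<ge> a\<close>. By the staircase property no product of two generators
  divides it, while for every minimal cover some such product divides it once the variables
  outside the cover are set to \<open>1\<close>.
\<close>

section \<open>Ideals and monomials\<close>

lemma is_ideal_ideal_gen: "is_ideal (ideal_gen G)"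
  unfolding ideal_gen_def is_ideal_def by auto

lemma ideal_gen_subset: "G \<subseteq> ideal_gen G"
  unfolding ideal_gen_def by auto

lemma ideal_gen_least: "is_ideal J \<Longrightarrow> G \<subseteq> J \<Longrightarrow> ideal_gen G \<subseteq> J"
  unfolding ideal_gen_def by auto

lemma ideal_mult_left: "is_ideal I \<Longrightarrow> a \<in> I \<Longrightarrow> r * a \<in> I"
  by (auto simp: is_ideal_def)

lemma ideal_sum_mem:
  assumes "is_ideal I" and "\<And>x. x \<in> A \<Longrightarrow> f x \<in> I"
  shows "sum f A \<in> I"
proof (cases "finite A")
  case True
  then show ?thesis
    using assms(2) by (induction A rule: finite_induct) (use assms(1) in \<open>auto simp: is_ideal_def\<close>)
qed (use assms(1) in \<open>simp add: is_ideal_def\<close>)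

lemma ideal_prod_mem: "a \<in> I \<Longrightarrow> b \<in> J \<Longrightarrow> a * b \<in> ideal_prod I J"
  unfolding ideal_prod_def by (rule subsetD[OF ideal_gen_subset]) blast

lemma ideal_prod_UNIV:
  assumes "is_ideal I"
  shows "ideal_prod I UNIV = I"
proof
  have "a * b \<in> I" if "a \<in> I" for a b
    using ideal_mult_left[OF assms that, of b] by (simp add: mult.commute)
  then show "ideal_prod I UNIV \<subseteq> I"
    unfolding ideal_prod_def by (intro ideal_gen_least[OF assms]) blast
  show "I \<subseteq> ideal_prod I UNIV"
  proof
    fix a
    assume "a \<in> I"
    then show "a \<in> ideal_prod I UNIV" using ideal_prod_mem[of a I 1 UNIV] by simp
  qed
qed

lemma ideal_pow_2: "is_ideal I \<Longrightarrow> ideal_pow I 2 = ideal_prod I I"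
  by (simp add: numeral_2_eq_2 ideal_prod_UNIV)

lemma one_notin_prime_ideal: "prime_ideal P \<Longrightarrow> 1 \<notin> P"
  unfolding prime_ideal_def using ideal_mult_left[of P 1] by auto

lemma keys_mon [simp]: "Poly_Mapping.keys (mon t :: ('v, 'a::field) mpoly) = {t}"
  by (simp add: mon_def)

lemma mon_add: "(mon (s + t) :: ('v, 'a::field) mpoly) = mon s * mon t"
  by (simp add: mon_def mult_single)

lemma mon_0: "(mon 0 :: ('v, 'a::field) mpoly) = 1"
  by (simp add: mon_def)

lemma poly_mapping_sum_single:
  "(\<Sum>t\<in>Poly_Mapping.keys p. Poly_Mapping.single t (Poly_Mapping.lookup p t)) = p"
  by (rule poly_mapping_eqI) (simp add: lookup_sum lookup_single when_def in_keys_iff)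

lemma mdvdI: "(\<And>k. Poly_Mapping.lookup s k \<le> Poly_Mapping.lookup t k) \<Longrightarrow> mdvd s t"
  unfolding mdvd_def by blast

lemma mdvdD: "mdvd s t \<Longrightarrow> Poly_Mapping.lookup s k \<le> Poly_Mapping.lookup t k"
  unfolding mdvd_def by blast

lemma mdvd_refl [simp]: "mdvd t t"
  unfolding mdvd_def by simp

lemma mdvd_trans: "mdvd r s \<Longrightarrow> mdvd s t \<Longrightarrow> mdvd r t"
  unfolding mdvd_def using le_trans by blast

lemma mdvd_add_left: "mdvd s t \<Longrightarrow> mdvd s (r + t)"
  unfolding mdvd_def by (simp add: lookup_add trans_le_add2)

lemma mdvd_diff_add: "mdvd s t \<Longrightarrow> t - s + s = t"
  unfolding mdvd_def by (intro poly_mapping_eqI) (simp add: lookup_add lookup_minus)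

lemma mdvd_single_iff: "mdvd (Poly_Mapping.single k n) t \<longleftrightarrow> n \<le> Poly_Mapping.lookup t k"
  unfolding mdvd_def by (auto simp: lookup_single when_def)

lemma mdvd_pair_iff:
  assumes "Poly_Mapping.keys s \<subseteq> {x, y}"
  shows "mdvd s t \<longleftrightarrow>
    Poly_Mapping.lookup s x \<le> Poly_Mapping.lookup t x \<and> Poly_Mapping.lookup s y \<le> Poly_Mapping.lookup t y"
proof -
  have "Poly_Mapping.lookup s k = 0" if "k \<noteq> x" "k \<noteq> y" for k
    using assms that unfolding subset_iff in_keys_iff by blast
  then show ?thesis unfolding mdvd_def by (metis le0)
qed

lemma doubleton_other: "A = {a, b} \<Longrightarrow> a \<noteq> b \<Longrightarrow> x \<in> A \<Longrightarrow> \<exists>y. y \<noteq> x \<and> A = {x, y}"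
  by auto

lemma lookup_eq_0_if_notin_pair:
  assumes "Poly_Mapping.keys g = {x, y}" and "k \<noteq> x" and "k \<noteq> y"
  shows "Poly_Mapping.lookup g k = 0"
proof -
  have "k \<notin> Poly_Mapping.keys g" using assms by simp
  then show ?thesis by (simp add: in_keys_iff)
qed

lemma ideal_mon_dvd:
  assumes "is_ideal I" and "(mon s :: ('v, 'a::field) mpoly) \<in> I" and "mdvd s t"
  shows "mon t \<in> I"
proof -
  have "mon (t - s) * mon s \<in> I" by (rule ideal_mult_left[OF assms(1,2)])
  then show ?thesis by (simp add: mon_add[symmetric] mdvd_diff_add[OF assms(3)])
qed

section \<open>Monomial ideals and their minimal generators\<close>

definition mon_ideal :: "('v \<Rightarrow>\<^sub>0 nat) set \<Rightarrow> ('v, 'a::field) mpoly set" where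
  "mon_ideal M = {p. \<forall>t\<in>Poly_Mapping.keys p. \<exists>m\<in>M. mdvd m t}"

lemma mon_mem_mon_ideal_iff: "(mon t :: ('v, 'a::field) mpoly) \<in> mon_ideal M \<longleftrightarrow> (\<exists>m\<in>M. mdvd m t)"
  unfolding mon_ideal_def by simp

lemma is_ideal_mon_ideal: "is_ideal (mon_ideal M :: ('v, 'a::field) mpoly set)"
  unfolding is_ideal_def
proof (intro conjI ballI allI)
  show "0 \<in> (mon_ideal M :: ('v, 'a) mpoly set)"
    unfolding mon_ideal_def by simp
  fix a b :: "('v, 'a) mpoly"
  assume "a \<in> mon_ideal M" "b \<in> mon_ideal M"
  then show "a + b \<in> mon_ideal M"
    using keys_add[of a b] unfolding mon_ideal_def by blast
next
  fix r a :: "('v, 'a) mpoly"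
  assume a: "a \<in> mon_ideal M"
  have "\<exists>m\<in>M. mdvd m t" if t: "t \<in> Poly_Mapping.keys (r * a)" for t
  proof -
    obtain s q where "t = s + q" "q \<in> Poly_Mapping.keys a"
      using keys_mult t by blast
    then show ?thesis using a mdvd_add_left unfolding mon_ideal_def by blast
  qed
  then show "r * a \<in> mon_ideal M"
    unfolding mon_ideal_def by blast
qed

lemma ideal_gen_mon: "ideal_gen (mon ` M) = (mon_ideal M :: ('v, 'a::field) mpoly set)"
proof
  have "mon m \<in> (mon_ideal M :: ('v, 'a) mpoly set)" if "m \<in> M" for m
    unfolding mon_mem_mon_ideal_iff using that by (intro bexI[of _ m]) simp_all
  then show "ideal_gen (mon ` M) \<subseteq> (mon_ideal M :: ('v, 'a) mpoly set)"
    by (intro ideal_gen_least[OF is_ideal_mon_ideal] image_subsetI)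
  show "mon_ideal M \<subseteq> ideal_gen (mon ` M :: ('v, 'a) mpoly set)"
  proof
    fix p :: "('v, 'a) mpoly"
    assume p: "p \<in> mon_ideal M"
    have "Poly_Mapping.single t (Poly_Mapping.lookup p t) \<in> ideal_gen (mon ` M)"
      if "t \<in> Poly_Mapping.keys p" for t
    proof -
      have "\<exists>m\<in>M. mdvd m t"
        using p that by (simp add: mon_ideal_def)
      then obtain m where "m \<in> M" "mdvd m t" by blast
      then have "mon m \<in> ideal_gen (mon ` M :: ('v, 'a) mpoly set)"
        by (intro subsetD[OF ideal_gen_subset] imageI)
      then have "Poly_Mapping.single (t - m) (Poly_Mapping.lookup p t) * mon m \<in> ideal_gen (mon ` M)"
        by (rule ideal_mult_left[OF is_ideal_ideal_gen])
      moreover have "Poly_Mapping.single (t - m) (Poly_Mapping.lookup p t) * mon m =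
          Poly_Mapping.single t (Poly_Mapping.lookup p t)"
        by (simp add: mon_def mult_single mdvd_diff_add[OF \<open>mdvd m t\<close>])
      ultimately show ?thesis by simp
    qed
    then have "(\<Sum>t\<in>Poly_Mapping.keys p. Poly_Mapping.single t (Poly_Mapping.lookup p t)) \<in> ideal_gen (mon ` M)"
      by (rule ideal_sum_mem[OF is_ideal_ideal_gen])
    then show "p \<in> ideal_gen (mon ` M)"
      by (simp only: poly_mapping_sum_single)
  qed
qed

lemma monomial_ideal_is_ideal: "monomial_ideal I \<Longrightarrow> is_ideal I"
  unfolding monomial_ideal_def using is_ideal_ideal_gen by blast

lemma monomial_ideal_mem_iff:
  assumes "monomial_ideal I"
  shows "p \<in> I \<longleftrightarrow> (\<forall>t\<in>Poly_Mapping.keys p. mon t \<in> I)"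
proof -
  obtain M where "I = mon_ideal M"
    using assms unfolding monomial_ideal_def ideal_gen_mon by blast
  then show ?thesis unfolding mon_ideal_def by simp
qed

definition deg :: "('v::finite \<Rightarrow>\<^sub>0 nat) \<Rightarrow> nat" where
  "deg t = (\<Sum>k\<in>UNIV. Poly_Mapping.lookup t k)"

lemma deg_less_if_mdvd:
  assumes "mdvd s t" and "s \<noteq> t"
  shows "deg s < deg t"
proof -
  have le: "\<forall>k\<in>UNIV. Poly_Mapping.lookup s k \<le> Poly_Mapping.lookup t k"
    using assms(1) by (simp add: mdvd_def)
  obtain k where "Poly_Mapping.lookup s k \<noteq> Poly_Mapping.lookup t k"
    using assms(2) by (meson poly_mapping_eqI)
  then have "Poly_Mapping.lookup s k < Poly_Mapping.lookup t k"
    using le by (simp add: order_less_le)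
  then show ?thesis
    unfolding deg_def by (intro sum_strict_mono_ex1[OF finite_UNIV le]) blast
qed

lemma min_gens_mon_mem: "g \<in> min_gens I \<Longrightarrow> (mon g :: ('v, 'a::field) mpoly) \<in> I"
  unfolding min_gens_def by blast

lemma min_gens_antichain:
  "g \<in> min_gens (I :: ('v, 'a::field) mpoly set) \<Longrightarrow> g' \<in> min_gens I \<Longrightarrow> mdvd g g' \<Longrightarrow> g = g'"
  unfolding min_gens_def by blast

lemma exists_min_gen_dvd:
  assumes "(mon t :: ('v::finite, 'a::field) mpoly) \<in> I"
  shows "\<exists>g\<in>min_gens I. mdvd g t"
proof -
  obtain g where g: "(mon g :: ('v, 'a) mpoly) \<in> I \<and> mdvd g t"
    and least: "\<And>g'. (mon g' :: ('v, 'a) mpoly) \<in> I \<and> mdvd g' t \<Longrightarrow> deg g \<le> deg g'"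
    using ex_has_least_nat[of "\<lambda>g. (mon g :: ('v, 'a) mpoly) \<in> I \<and> mdvd g t" t deg] assms by auto
  have "g \<in> min_gens I"
    unfolding min_gens_def
  proof (intro CollectI conjI notI)
    show "(mon g :: ('v, 'a) mpoly) \<in> I" using g by blast
    assume "\<exists>g'. (mon g' :: ('v, 'a) mpoly) \<in> I \<and> mdvd g' g \<and> g' \<noteq> g"
    then obtain g' where g': "(mon g' :: ('v, 'a) mpoly) \<in> I" "mdvd g' g" "g' \<noteq> g" by blast
    have "mdvd g' t" using mdvd_trans g'(2) g by blast
    then have "deg g \<le> deg g'" using least g'(1) by blast
    moreover have "deg g' < deg g" using deg_less_if_mdvd g'(2,3) by blast
    ultimately show False by simp
  qed
  with g show ?thesis by blast
qed

lemma mon_mem_square_imp_min_gens_sum_dvd: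
  fixes I :: "('v::finite, 'a::field) mpoly set"
  assumes I: "monomial_ideal I" and "mon w \<in> ideal_prod I I"
  shows "\<exists>g1\<in>min_gens I. \<exists>g2\<in>min_gens I. mdvd (g1 + g2) w"
proof -
  let ?M = "{g1 + g2 | g1 g2. g1 \<in> min_gens I \<and> g2 \<in> min_gens I}"
  have prod_mem: "a * b \<in> mon_ideal ?M" if "a \<in> I" "b \<in> I" for a b :: "('v, 'a) mpoly"
    unfolding mon_ideal_def
  proof (intro CollectI ballI)
    fix t
    assume "t \<in> Poly_Mapping.keys (a * b)"
    then obtain s q where sq: "t = s + q" "s \<in> Poly_Mapping.keys a" "q \<in> Poly_Mapping.keys b"
      using keys_mult[of a b] by blast
    have "mon s \<in> I" using sq(2) \<open>a \<in> I\<close> monomial_ideal_mem_iff[OF I] by blast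
    then obtain g1 where g1: "g1 \<in> min_gens I" "mdvd g1 s" using exists_min_gen_dvd by blast
    have "mon q \<in> I" using sq(3) \<open>b \<in> I\<close> monomial_ideal_mem_iff[OF I] by blast
    then obtain g2 where g2: "g2 \<in> min_gens I" "mdvd g2 q" using exists_min_gen_dvd by blast
    have "mdvd (g1 + g2) t"
      using mdvdD[OF g1(2)] mdvdD[OF g2(2)] unfolding sq(1) by (intro mdvdI) (simp add: lookup_add add_mono)
    moreover have "g1 + g2 \<in> ?M" using g1(1) g2(1) by blast
    ultimately show "\<exists>m\<in>?M. mdvd m t" by blast
  qed
  have "{a * b | a b. a \<in> I \<and> b \<in> I} \<subseteq> mon_ideal ?M" using prod_mem by blast
  then have "ideal_prod I I \<subseteq> mon_ideal ?M"
    unfolding ideal_prod_def by (rule ideal_gen_least[OF is_ideal_mon_ideal])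
  then obtain m where "m \<in> ?M" "mdvd m w"
    using assms(2) mon_mem_mon_ideal_iff[of w ?M] by blast
  then show ?thesis by blast
qed

lemma min_gens_pair_eq:
  assumes "g \<in> min_gens I" "g' \<in> min_gens I" "Poly_Mapping.keys g = {x, y}"
    and "Poly_Mapping.lookup g x \<le> Poly_Mapping.lookup g' x"
    and "Poly_Mapping.lookup g y \<le> Poly_Mapping.lookup g' y"
  shows "g = g'"
proof -
  have "mdvd g g'" using mdvd_pair_iff[of g x y] assms(3-5) by simp
  then show ?thesis using min_gens_antichain assms(1,2) by blast
qed

lemma inj_on_lookup_min_gens_pair:
  "inj_on (\<lambda>g. Poly_Mapping.lookup g x) {g \<in> min_gens I. Poly_Mapping.keys g = {x, y}}"
proof (rule inj_onI)
  fix g g'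
  assume "g \<in> {g \<in> min_gens I. Poly_Mapping.keys g = {x, y}}"
    and "g' \<in> {g \<in> min_gens I. Poly_Mapping.keys g = {x, y}}"
    and "Poly_Mapping.lookup g x = Poly_Mapping.lookup g' x"
  then show "g = g'"
    using min_gens_pair_eq[of g I g' x y] min_gens_pair_eq[of g' I g x y] by (cases "Poly_Mapping.lookup g y \<le> Poly_Mapping.lookup g' y") auto
qed

text \<open>Minimal generators with the same support form an antichain in \<open>\<nat>\<^sup>2\<close>, hence lie in the union of
  two strips, on each of which one exponent determines the generator.\<close>
lemma finite_min_gens_pair: "finite {g \<in> min_gens I. Poly_Mapping.keys g = {x, y}}" (is "finite ?S")
proof (cases "?S = {}")
  case True
  then show ?thesis by (simp only: finite.emptyI)
next
  case False
  then obtain g0 where g0: "g0 \<in> ?S" by blast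
  have strip: "finite {g \<in> ?S. Poly_Mapping.lookup g z \<le> Poly_Mapping.lookup g0 z}"
    if "{x, y} = {z, z'}" for z z'
  proof (rule finite_imageD)
    show "finite ((\<lambda>g. Poly_Mapping.lookup g z) ` {g \<in> ?S. Poly_Mapping.lookup g z \<le> Poly_Mapping.lookup g0 z})"
      by (rule finite_subset[of _ "{..Poly_Mapping.lookup g0 z}"]) auto
    show "inj_on (\<lambda>g. Poly_Mapping.lookup g z) {g \<in> ?S. Poly_Mapping.lookup g z \<le> Poly_Mapping.lookup g0 z}"
      using inj_on_lookup_min_gens_pair[of z I z'] that by (auto intro: inj_on_subset)
  qed
  have "?S \<subseteq> {g \<in> ?S. Poly_Mapping.lookup g x \<le> Poly_Mapping.lookup g0 x}
      \<union> {g \<in> ?S. Poly_Mapping.lookup g y \<le> Poly_Mapping.lookup g0 y}"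
  proof
    fix g
    assume g: "g \<in> ?S"
    show "g \<in> {g \<in> ?S. Poly_Mapping.lookup g x \<le> Poly_Mapping.lookup g0 x}
      \<union> {g \<in> ?S. Poly_Mapping.lookup g y \<le> Poly_Mapping.lookup g0 y}"
    proof (rule ccontr)
      assume "\<not> ?thesis"
      then have "Poly_Mapping.lookup g0 x < Poly_Mapping.lookup g x"
        "Poly_Mapping.lookup g0 y < Poly_Mapping.lookup g y" using g by auto
      then show False using min_gens_pair_eq[of g0 I g x y] g0 g by auto
    qed
  qed
  moreover have "finite {g \<in> ?S. Poly_Mapping.lookup g x \<le> Poly_Mapping.lookup g0 x}"
    by (rule strip[of x y]) simp
  moreover have "finite {g \<in> ?S. Poly_Mapping.lookup g y \<le> Poly_Mapping.lookup g0 y}"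
    by (rule strip[of y x]) auto
  ultimately show ?thesis by (meson finite_Un finite_subset)
qed

lemma finite_min_gens:
  fixes I :: "('v::finite, 'a::field) mpoly set"
  assumes "support2 I"
  shows "finite (min_gens I)"
proof (rule finite_subset)
  show "min_gens I \<subseteq> (\<Union>(x, y)\<in>UNIV. {g \<in> min_gens I. Poly_Mapping.keys g = {x, y}})"
    using assms unfolding support2_def by blast
  show "finite (\<Union>(x, y)\<in>(UNIV :: ('v \<times> 'v) set). {g \<in> min_gens I. Poly_Mapping.keys g = {x, y}})"
    using finite_min_gens_pair by auto
qed

section \<open>Irreducible decompositions\<close>

definition pure_power_ideal :: "'v set \<Rightarrow> ('v \<Rightarrow> nat) \<Rightarrow> ('v, 'a::field) mpoly set" where
  "pure_power_ideal A e = ideal_gen ((\<lambda>k. mon (Poly_Mapping.single k (e k))) ` A)"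

lemma irreducible_monomial_ideal_iff:
  "irreducible_monomial_ideal Q \<longleftrightarrow> (\<exists>A e. A \<noteq> {} \<and> (\<forall>k\<in>A. 1 \<le> e k) \<and> Q = pure_power_ideal A e)"
  unfolding irreducible_monomial_ideal_def pure_power_ideal_def by simp

lemma pure_power_ideal_eq_mon_ideal:
  "pure_power_ideal A e = (mon_ideal ((\<lambda>k. Poly_Mapping.single k (e k)) ` A) :: ('v, 'a::field) mpoly set)"
  unfolding pure_power_ideal_def ideal_gen_mon[symmetric] image_image ..

lemma mon_mem_pure_power_ideal_iff:
  "(mon t :: ('v, 'a::field) mpoly) \<in> pure_power_ideal A e \<longleftrightarrow> (\<exists>k\<in>A. e k \<le> Poly_Mapping.lookup t k)"
  by (simp add: pure_power_ideal_eq_mon_ideal mon_mem_mon_ideal_iff mdvd_single_iff)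

lemma mem_pure_power_ideal_iff:
  "(p :: ('v, 'a::field) mpoly) \<in> pure_power_ideal A e \<longleftrightarrow> (\<forall>t\<in>Poly_Mapping.keys p. mon t \<in> pure_power_ideal A e)"
  unfolding pure_power_ideal_eq_mon_ideal mon_mem_mon_ideal_iff by (simp add: mon_ideal_def)

lemma keys_power_pure_power_ideal:
  fixes q :: "('v, 'a::field) mpoly"
  assumes q: "q \<in> pure_power_ideal A e" and e: "\<forall>k\<in>A. 1 \<le> e k" and "finite A"
  shows "t \<in> Poly_Mapping.keys (q ^ n) \<Longrightarrow> n \<le> (\<Sum>k\<in>A. Poly_Mapping.lookup t k)"
proof (induction n arbitrary: t)
  case (Suc n)
  obtain s r where sr: "t = s + r" "s \<in> Poly_Mapping.keys q" "r \<in> Poly_Mapping.keys (q ^ n)"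
    using Suc.prems keys_mult[of q "q ^ n"] by auto
  obtain k where k: "k \<in> A" "e k \<le> Poly_Mapping.lookup s k"
    using q sr(2) by (meson mem_pure_power_ideal_iff mon_mem_pure_power_ideal_iff)
  have "1 \<le> e k" using e k(1) by blast
  also have "\<dots> \<le> Poly_Mapping.lookup s k" by (rule k(2))
  also have "\<dots> \<le> (\<Sum>k\<in>A. Poly_Mapping.lookup s k)"
    using k(1) \<open>finite A\<close> by (intro member_le_sum) auto
  moreover have "(\<Sum>k\<in>A. Poly_Mapping.lookup t k)
      = (\<Sum>k\<in>A. Poly_Mapping.lookup s k) + (\<Sum>k\<in>A. Poly_Mapping.lookup r k)"
    unfolding sr(1) by (simp add: lookup_add sum.distrib)
  ultimately show ?case using Suc.IH[OF sr(3)] by simp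
qed simp

lemma power_mem_pure_power_ideal:
  fixes q :: "('v, 'a::field) mpoly"
  assumes q: "q \<in> pure_power_ideal A e" and e: "\<forall>k\<in>A. 1 \<le> e k" and "finite A"
  shows "q ^ Suc (sum e' A) \<in> pure_power_ideal A e'"
proof -
  have "(mon t :: ('v, 'a) mpoly) \<in> pure_power_ideal A e'" if t: "t \<in> Poly_Mapping.keys (q ^ Suc (sum e' A))" for t
  proof (rule ccontr)
    assume "(mon t :: ('v, 'a) mpoly) \<notin> pure_power_ideal A e'"
    then have "\<forall>k\<in>A. Poly_Mapping.lookup t k \<le> e' k"
      unfolding mon_mem_pure_power_ideal_iff by auto
    then have "(\<Sum>k\<in>A. Poly_Mapping.lookup t k) \<le> sum e' A" by (simp add: sum_mono)
    then show False using keys_power_pure_power_ideal[OF q e \<open>finite A\<close> t] by simp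
  qed
  then show ?thesis using mem_pure_power_ideal_iff by blast
qed

lemma radical_pure_power_ideal_subset:
  assumes "\<forall>k\<in>A. 1 \<le> e k" and "finite A"
  shows "radical (pure_power_ideal A e :: ('v, 'a::field) mpoly set) \<subseteq> radical (pure_power_ideal A e')"
proof
  fix f :: "('v, 'a) mpoly"
  assume "f \<in> radical (pure_power_ideal A e)"
  then obtain n where "f ^ n \<in> pure_power_ideal A e" unfolding radical_def by blast
  then have "(f ^ n) ^ Suc (sum e' A) \<in> pure_power_ideal A e'"
    using power_mem_pure_power_ideal assms by blast
  then show "f \<in> radical (pure_power_ideal A e')"
    unfolding radical_def power_mult[symmetric] by blast
qed

lemma radical_pure_power_ideal_eq:
  assumes "\<forall>k\<in>A. 1 \<le> e k" and "\<forall>k\<in>A. 1 \<le> e' k" and "finite A"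
  shows "radical (pure_power_ideal A e :: ('v, 'a::field) mpoly set) = radical (pure_power_ideal A e')"
  by (intro subset_antisym radical_pure_power_ideal_subset assms)

lemma finite_bounded_monomials: "finite {t :: 'v::finite \<Rightarrow>\<^sub>0 nat. \<forall>k. Poly_Mapping.lookup t k \<le> B}"
proof (rule finite_imageD)
  show "finite (Poly_Mapping.lookup ` {t :: 'v \<Rightarrow>\<^sub>0 nat. \<forall>k. Poly_Mapping.lookup t k \<le> B})"
    by (rule finite_subset[OF _ finite_PiE[of UNIV "\<lambda>_. {..B}"]]) (auto simp: PiE_iff)
  show "inj_on Poly_Mapping.lookup {t :: 'v \<Rightarrow>\<^sub>0 nat. \<forall>k. Poly_Mapping.lookup t k \<le> B}"
    by (rule inj_onI) (rule poly_mapping_eqI, simp)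
qed

lemma finite_functions_bounded:
  fixes F :: "('v::finite \<Rightarrow> nat) set"
  assumes "finite F"
  shows "\<exists>B. \<forall>f\<in>F. \<forall>k. f k \<le> B"
proof (intro exI ballI allI)
  fix f k
  assume "f \<in> F"
  have "f k \<le> (\<Sum>k\<in>UNIV. f k)" by (intro member_le_sum) simp_all
  also have "\<dots> \<le> (\<Sum>f\<in>F. \<Sum>k\<in>UNIV. f k)" using \<open>f \<in> F\<close> assms by (intro member_le_sum) simp_all
  finally show "f k \<le> (\<Sum>f\<in>F. \<Sum>k\<in>UNIV. f k)" .
qed

lemma exists_irredundant_subset:
  assumes "finite D0" and "\<Inter>D0 = I"
  shows "\<exists>D\<subseteq>D0. \<Inter>D = I \<and> (\<forall>Q\<in>D. \<Inter>(D - {Q}) \<noteq> I)"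
proof -
  let ?F = "\<lambda>D. D \<subseteq> D0 \<and> \<Inter>D = I"
  have "?F D0" using assms(2) by simp
  from ex_has_least_nat[of ?F D0 card, OF this] obtain D
    where D: "D \<subseteq> D0" "\<Inter>D = I" and least: "\<forall>D'. ?F D' \<longrightarrow> card D \<le> card D'"
    by blast
  have "\<Inter>(D - {Q}) \<noteq> I" if Q: "Q \<in> D" for Q
  proof
    assume "\<Inter>(D - {Q}) = I"
    moreover have "D - {Q} \<subseteq> D0" using D(1) by auto
    ultimately have "card D \<le> card (D - {Q})" using least by simp
    moreover have "card (D - {Q}) < card D"
      using finite_subset[OF D(1) assms(1)] Q by (rule card_Diff1_less)
    ultimately show False by simp
  qed
  with D show ?thesis by (intro exI[of _ D]) simp
qed

lemma monomial_ideal_subset_pure_power_ideal: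
  fixes I :: "('v::finite, 'a::field) mpoly set"
  assumes I: "monomial_ideal I" and bound: "\<And>g k. g \<in> min_gens I \<Longrightarrow> Poly_Mapping.lookup g k \<le> B"
    and w: "(mon w :: ('v, 'a) mpoly) \<notin> I"
  shows "I \<subseteq> pure_power_ideal {k. Poly_Mapping.lookup w k < B} (\<lambda>k. Poly_Mapping.lookup w k + 1)"
proof
  fix p
  assume p: "p \<in> I"
  have "mon t \<in> pure_power_ideal {k. Poly_Mapping.lookup w k < B} (\<lambda>k. Poly_Mapping.lookup w k + 1)"
    if t: "t \<in> Poly_Mapping.keys p" for t
  proof -
    have "mon t \<in> I" using p t monomial_ideal_mem_iff[OF I] by blast
    then obtain g where g: "g \<in> min_gens I" "mdvd g t" using exists_min_gen_dvd by blast
    have "\<not> mdvd g w"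
      using w ideal_mon_dvd[OF monomial_ideal_is_ideal[OF I] min_gens_mon_mem[OF g(1)]] by blast
    then obtain k where k: "Poly_Mapping.lookup w k < Poly_Mapping.lookup g k"
      unfolding mdvd_def by (auto simp: not_le)
    have "Poly_Mapping.lookup w k < B" using k bound[OF g(1), of k] by simp
    moreover have "Poly_Mapping.lookup w k + 1 \<le> Poly_Mapping.lookup t k" using k mdvdD[OF g(2), of k] by simp
    ultimately show ?thesis unfolding mon_mem_pure_power_ideal_iff by blast
  qed
  then show "p \<in> pure_power_ideal {k. Poly_Mapping.lookup w k < B} (\<lambda>k. Poly_Mapping.lookup w k + 1)"
    using mem_pure_power_ideal_iff by blast
qed

lemma monomial_ideal_eq_Inter_pure_power_ideals:
  fixes I :: "('v::finite, 'a::field) mpoly set"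
  assumes I: "monomial_ideal I" and bound: "\<And>g k. g \<in> min_gens I \<Longrightarrow> Poly_Mapping.lookup g k \<le> B"
  shows "I = (\<Inter>w\<in>{w. (\<forall>k. Poly_Mapping.lookup w k \<le> B) \<and> mon w \<notin> I}.
    pure_power_ideal {k. Poly_Mapping.lookup w k < B} (\<lambda>k. Poly_Mapping.lookup w k + 1))"
    (is "I = (\<Inter>w\<in>?W. ?Q w)")
proof
  show "I \<subseteq> (\<Inter>w\<in>?W. ?Q w)"
    using monomial_ideal_subset_pure_power_ideal[OF I bound] by blast
  show "(\<Inter>w\<in>?W. ?Q w) \<subseteq> I"
  proof
    fix p
    assume p: "p \<in> (\<Inter>w\<in>?W. ?Q w)"
    have "mon t \<in> I" if t: "t \<in> Poly_Mapping.keys p" for t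
    proof (rule ccontr)
      assume t_notin: "mon t \<notin> I"
      define w where "w = Abs_poly_mapping (\<lambda>k. min (Poly_Mapping.lookup t k) B)"
      have lookup_w: "Poly_Mapping.lookup w k = min (Poly_Mapping.lookup t k) B" for k
        unfolding w_def by simp
      have "mdvd w t" by (rule mdvdI) (simp add: lookup_w)
      then have "mon w \<notin> I"
        using t_notin ideal_mon_dvd[OF monomial_ideal_is_ideal[OF I]] by blast
      then have "w \<in> ?W" by (simp add: lookup_w)
      then have "mon t \<in> ?Q w" using p t mem_pure_power_ideal_iff by blast
      then show False by (auto simp: mon_mem_pure_power_ideal_iff lookup_w)
    qed
    then show "p \<in> I" using monomial_ideal_mem_iff[OF I] by blast
  qed
qed

lemma exists_irred_decomp:
  fixes I :: "('v::finite, 'a::field) mpoly set"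
  assumes I: "monomial_ideal I" and fin: "finite (min_gens I)" and ne: "min_gens I \<noteq> {}"
  shows "\<exists>D. irred_decomp I D"
proof -
  obtain B where bound: "\<And>g k. g \<in> min_gens I \<Longrightarrow> Poly_Mapping.lookup g k \<le> B"
    using finite_functions_bounded[of "Poly_Mapping.lookup ` min_gens I"] fin by auto
  define W where "W = {w. (\<forall>k. Poly_Mapping.lookup w k \<le> B) \<and> (mon w :: ('v, 'a) mpoly) \<notin> I}"
  define Q where "Q w = (pure_power_ideal {k. Poly_Mapping.lookup w k < B} (\<lambda>k. Poly_Mapping.lookup w k + 1)
    :: ('v, 'a) mpoly set)" for w
  have "finite W"
    unfolding W_def by (rule finite_subset[OF _ finite_bounded_monomials[of B]]) blast
  then have fin_D0: "finite (Q ` W)" by (rule finite_imageI)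
  have "\<Inter>(Q ` W) = I"
    using monomial_ideal_eq_Inter_pure_power_ideals[OF I bound] unfolding W_def Q_def by simp
  from exists_irredundant_subset[OF fin_D0 this] obtain D
    where D: "D \<subseteq> Q ` W" "\<Inter>D = I" "\<forall>Q'\<in>D. \<Inter>(D - {Q'}) \<noteq> I"
    by (elim exE conjE)
  have "irreducible_monomial_ideal (Q w)" if w: "w \<in> W" for w
  proof -
    obtain g where g: "g \<in> min_gens I" using ne by blast
    have "{k. Poly_Mapping.lookup w k < B} \<noteq> {}"
    proof
      assume "{k. Poly_Mapping.lookup w k < B} = {}"
      then have "B \<le> Poly_Mapping.lookup w k" for k by (simp add: not_less[symmetric])
      then have "mdvd g w" using bound[OF g] by (intro mdvdI) (rule le_trans)
      then have "(mon w :: ('v, 'a) mpoly) \<in> I"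
        using ideal_mon_dvd[OF monomial_ideal_is_ideal[OF I] min_gens_mon_mem[OF g]] by blast
      then show False using w unfolding W_def by blast
    qed
    then show ?thesis unfolding irreducible_monomial_ideal_iff Q_def by (intro exI conjI) simp_all
  qed
  then have "\<forall>Q'\<in>D. irreducible_monomial_ideal Q'" using D(1) by blast
  then have "irred_decomp I D"
    unfolding irred_decomp_def using D finite_subset[OF D(1) fin_D0] by simp
  then show ?thesis by blast
qed

section \<open>Minimal primes and vertex covers\<close>

definition var :: "'v \<Rightarrow> ('v, 'a::field) mpoly" where
  "var k = mon (Poly_Mapping.single k 1)"

abbreviation var_ideal :: "'v set \<Rightarrow> ('v, 'a::field) mpoly set" where
  "var_ideal V \<equiv> pure_power_ideal V (\<lambda>_. 1)"

lemma prime_ideal_mon_mem_imp_var: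
  fixes P :: "('v::finite, 'a::field) mpoly set"
  assumes P: "prime_ideal P"
  shows "mon t \<in> P \<Longrightarrow> \<exists>k. 0 < Poly_Mapping.lookup t k \<and> var k \<in> P"
proof (induction "deg t" arbitrary: t rule: less_induct)
  case less
  show ?case
  proof (cases "t = 0")
    case True
    then show ?thesis using less.prems one_notin_prime_ideal[OF P] by (simp add: mon_0)
  next
    case False
    then obtain k where k: "Poly_Mapping.lookup t k \<noteq> 0"
      by (metis lookup_zero poly_mapping_eqI)
    define t' where "t' = t - Poly_Mapping.single k 1"
    have t: "t = Poly_Mapping.single k 1 + t'"
      unfolding t'_def using k
      by (intro poly_mapping_eqI) (auto simp: lookup_add lookup_minus lookup_single when_def)
    have "var k * mon t' \<in> P" using less.prems unfolding var_def by (simp add: t mon_add)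
    then have "var k \<in> P \<or> mon t' \<in> P" using P unfolding prime_ideal_def by blast
    then show ?thesis
    proof
      assume "var k \<in> P"
      then show ?thesis using k by blast
    next
      assume t'_mem: "mon t' \<in> P"
      have "mdvd t' t" unfolding t by (rule mdvd_add_left[OF mdvd_refl])
      moreover have "t' \<noteq> t"
        using arg_cong[OF t, of "\<lambda>s. Poly_Mapping.lookup s k"] by (auto simp: lookup_add)
      ultimately have "deg t' < deg t" by (rule deg_less_if_mdvd)
      then obtain k' where "0 < Poly_Mapping.lookup t' k'" "var k' \<in> P" using less.hyps t'_mem by blast
      moreover have "Poly_Mapping.lookup t' k' \<le> Poly_Mapping.lookup t k'" using mdvdD[OF \<open>mdvd t' t\<close>] .
      ultimately show ?thesis by (meson less_le_trans)
    qed
  qed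
qed

lemma lookup_mult_unique_sum:
  fixes a b :: "('v, 'a::field) mpoly"
  assumes uniq: "\<And>l q. l \<in> Poly_Mapping.keys a \<Longrightarrow> q \<in> Poly_Mapping.keys b \<Longrightarrow> l + q = s + t \<Longrightarrow> l = s \<and> q = t"
  shows "Poly_Mapping.lookup (a * b) (s + t) = Poly_Mapping.lookup a s * Poly_Mapping.lookup b t"
proof -
  have inner: "(Poly_Mapping.lookup b q when s + t = l + q) = ((Poly_Mapping.lookup b t when l = s) when q = t)"
    if "l \<in> Poly_Mapping.keys a" for l q
    using uniq[OF that, of q] by (cases "q \<in> Poly_Mapping.keys b") (auto simp: when_def in_keys_iff)
  have "Poly_Mapping.lookup a l * (\<Sum>q. Poly_Mapping.lookup b q when s + t = l + q)
      = (Poly_Mapping.lookup a s * Poly_Mapping.lookup b t when l = s)" for l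
    using inner[of l] by (cases "l \<in> Poly_Mapping.keys a") (auto simp: when_def in_keys_iff)
  then show ?thesis by (simp add: lookup_mult)
qed

lemma exists_additive_embedding:
  "\<exists>emb :: ('v::finite \<Rightarrow>\<^sub>0 nat) \<Rightarrow> (nat \<Rightarrow>\<^sub>0 nat). inj emb \<and> (\<forall>s t. emb (s + t) = emb s + emb t)"
proof -
  obtain h :: "'v \<Rightarrow> nat" where h: "inj h"
    using finite_imp_inj_to_nat_seg[OF finite_UNIV] by (metis inj_on_def)
  define emb where "emb t = (\<Sum>k\<in>UNIV. Poly_Mapping.single (h k) (Poly_Mapping.lookup t k))"
    for t :: "'v \<Rightarrow>\<^sub>0 nat"
  have "Poly_Mapping.lookup (emb t) (h k) = Poly_Mapping.lookup t k" for t k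
    unfolding emb_def using h by (simp add: lookup_sum lookup_single when_def inj_eq)
  then have "inj emb" by (metis injI poly_mapping_eqI)
  moreover have "emb (s + t) = emb s + emb t" for s t
    unfolding emb_def by (simp add: lookup_add single_add sum.distrib)
  ultimately show ?thesis by blast
qed

lemma additive_inj_sum_eq_max:
  fixes f :: "'a::plus \<Rightarrow> 'b::ordered_cancel_comm_monoid_add"
  assumes "inj f" and "\<And>s t. f (s + t) = f s + f t"
    and "f l \<le> f s" and "f q \<le> f t" and "l + q = s + t"
  shows "l = s \<and> q = t"
proof -
  have sum: "f l + f q = f s + f t" using assms(2,5) by metis
  have "f l = f s"
  proof (rule ccontr)
    assume "f l \<noteq> f s"
    then have "f l + f q < f s + f t" using assms(3,4) by (intro add_less_le_mono) simp_all
    with sum show False by simp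
  qed
  moreover from this have "f q = f t" using sum by simp
  ultimately show ?thesis using assms(1) by (simp add: inj_eq)
qed

lemma finite_ex_max:
  fixes f :: "'a \<Rightarrow> 'b::linorder"
  assumes "finite A" and "A \<noteq> {}"
  obtains x where "x \<in> A" and "\<And>y. y \<in> A \<Longrightarrow> f y \<le> f x"
proof -
  have "Max (f ` A) \<in> f ` A" using assms by simp
  then obtain x where "x \<in> A" "f x = Max (f ` A)" by (metis imageE)
  with assms show ?thesis using that by simp
qed

lemma exists_V_free_key_if_notin_var_ideal:
  assumes "(p :: ('v, 'a::field) mpoly) \<notin> var_ideal V"
  shows "\<exists>t\<in>Poly_Mapping.keys p. \<forall>k\<in>V. Poly_Mapping.lookup t k = 0"
proof -
  have "\<not> (\<forall>t\<in>Poly_Mapping.keys p. mon t \<in> (var_ideal V :: ('v, 'a) mpoly set))"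
    using assms mem_pure_power_ideal_iff[of p V "\<lambda>_. 1"] by blast
  then show ?thesis by (auto simp: mon_mem_pure_power_ideal_iff Suc_le_eq)
qed

text \<open>\<open>'v \<Rightarrow>\<^sub>0 nat\<close> carries no monomial order since \<open>'v\<close> is unordered; the embedding into
  \<open>nat \<Rightarrow>\<^sub>0 nat\<close> supplies one, and with it the usual leading-term argument.\<close>
lemma prime_var_ideal: "prime_ideal (var_ideal V :: ('v::finite, 'a::field) mpoly set)"
  unfolding prime_ideal_def
proof (intro conjI allI impI)
  show "is_ideal (var_ideal V :: ('v, 'a) mpoly set)"
    unfolding pure_power_ideal_def by (rule is_ideal_ideal_gen)
  have "(1 :: ('v, 'a) mpoly) \<notin> var_ideal V"
    using mon_mem_pure_power_ideal_iff[of 0 V "\<lambda>_. 1"] by (simp add: mon_0)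
  then show "var_ideal V \<noteq> (UNIV :: ('v, 'a) mpoly set)" by blast
  fix a b :: "('v, 'a) mpoly"
  assume ab: "a * b \<in> var_ideal V"
  show "a \<in> var_ideal V \<or> b \<in> var_ideal V"
  proof (rule ccontr)
    define free where "free p = {s \<in> Poly_Mapping.keys p. \<forall>k\<in>V. Poly_Mapping.lookup s k = 0}"
      for p :: "('v, 'a) mpoly"
    assume "\<not> (a \<in> var_ideal V \<or> b \<in> var_ideal V)"
    then have "a \<notin> var_ideal V" "b \<notin> var_ideal V" by simp_all
    then have "free a \<noteq> {}" "free b \<noteq> {}"
      unfolding free_def using exists_V_free_key_if_notin_var_ideal[of a V]
        exists_V_free_key_if_notin_var_ideal[of b V] by auto
    moreover have "finite (free a)" "finite (free b)" unfolding free_def by simp_all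
    moreover obtain emb :: "('v \<Rightarrow>\<^sub>0 nat) \<Rightarrow> (nat \<Rightarrow>\<^sub>0 nat)"
      where emb: "inj emb" "\<And>s t. emb (s + t) = emb s + emb t"
      using exists_additive_embedding by blast
    ultimately obtain s0 t0 where s0: "s0 \<in> free a" "\<And>s. s \<in> free a \<Longrightarrow> emb s \<le> emb s0"
      and t0: "t0 \<in> free b" "\<And>t. t \<in> free b \<Longrightarrow> emb t \<le> emb t0"
      using finite_ex_max[of "free a" emb] finite_ex_max[of "free b" emb] by metis
    have "l = s0 \<and> q = t0"
      if l: "l \<in> Poly_Mapping.keys a" and q: "q \<in> Poly_Mapping.keys b" and lq: "l + q = s0 + t0" for l q
    proof (rule additive_inj_sum_eq_max[OF emb _ _ lq])
      have "Poly_Mapping.lookup (l + q) k = 0" if "k \<in> V" for k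
        using s0(1) t0(1) that unfolding lq free_def by (simp add: lookup_add)
      then have "l \<in> free a" "q \<in> free b" using l q unfolding free_def by (simp_all add: lookup_add)
      then show "emb l \<le> emb s0" "emb q \<le> emb t0" using s0(2) t0(2) by blast+
    qed
    then have "Poly_Mapping.lookup (a * b) (s0 + t0) = Poly_Mapping.lookup a s0 * Poly_Mapping.lookup b t0"
      by (rule lookup_mult_unique_sum)
    also have "\<dots> \<noteq> 0" using s0(1) t0(1) by (simp add: free_def in_keys_iff)
    finally have "s0 + t0 \<in> Poly_Mapping.keys (a * b)" by (simp add: in_keys_iff)
    then have "mon (s0 + t0) \<in> (var_ideal V :: ('v, 'a) mpoly set)"
      using ab mem_pure_power_ideal_iff[of "a * b" V "\<lambda>_. 1"] by blast
    then obtain k where "k \<in> V" "1 \<le> Poly_Mapping.lookup (s0 + t0) k"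
      unfolding mon_mem_pure_power_ideal_iff by blast
    then show False using s0(1) t0(1) by (simp add: free_def lookup_add)
  qed
qed

lemma var_mem_var_ideal_iff: "(var k :: ('v, 'a::field) mpoly) \<in> var_ideal V \<longleftrightarrow> k \<in> V"
  unfolding var_def mon_mem_pure_power_ideal_iff by (auto simp: lookup_single when_def)

lemma var_ideal_subset:
  assumes "is_ideal P" and "\<And>k. k \<in> V \<Longrightarrow> var k \<in> P"
  shows "var_ideal V \<subseteq> P"
  unfolding pure_power_ideal_def using assms(2) unfolding var_def by (intro ideal_gen_least[OF assms(1)]) auto

definition cover :: "('v, 'a::field) mpoly set \<Rightarrow> 'v set \<Rightarrow> bool" where
  "cover I V \<longleftrightarrow> (\<forall>g\<in>min_gens I. Poly_Mapping.keys g \<inter> V \<noteq> {})"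

definition min_cover :: "('v, 'a::field) mpoly set \<Rightarrow> 'v set \<Rightarrow> bool" where
  "min_cover I V \<longleftrightarrow> cover I V \<and> (\<forall>V'\<subseteq>V. cover I V' \<longrightarrow> V' = V)"

lemma subset_var_ideal_if_cover:
  fixes I :: "('v::finite, 'a::field) mpoly set"
  assumes I: "monomial_ideal I" and "cover I V"
  shows "I \<subseteq> var_ideal V"
proof
  fix p
  assume p: "p \<in> I"
  have "mon t \<in> var_ideal V" if t: "t \<in> Poly_Mapping.keys p" for t
  proof -
    have "mon t \<in> I" using p t monomial_ideal_mem_iff[OF I] by blast
    then obtain g where g: "g \<in> min_gens I" "mdvd g t" using exists_min_gen_dvd by blast
    then obtain k where k: "k \<in> Poly_Mapping.keys g" "k \<in> V" using \<open>cover I V\<close> unfolding cover_def by blast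
    then have "1 \<le> Poly_Mapping.lookup t k" using mdvdD[OF g(2), of k] by (simp add: in_keys_iff)
    then show ?thesis unfolding mon_mem_pure_power_ideal_iff using k(2) by blast
  qed
  then show "p \<in> var_ideal V" using mem_pure_power_ideal_iff by blast
qed

lemma min_cover_if_min_prime:
  fixes I :: "('v::finite, 'a::field) mpoly set"
  assumes I: "monomial_ideal I" and P: "P \<in> min_primes I"
  shows "min_cover I {k. var k \<in> P}"
proof -
  have prime: "prime_ideal P" and "I \<subseteq> P"
    and minimal: "\<And>Q. prime_ideal Q \<Longrightarrow> I \<subseteq> Q \<Longrightarrow> Q \<subseteq> P \<Longrightarrow> Q = P"
    using P unfolding min_primes_def by blast+
  have "cover I {k. var k \<in> P}"
    unfolding cover_def
  proof
    fix g
    assume "g \<in> min_gens I"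
    then have "mon g \<in> P" using \<open>I \<subseteq> P\<close> min_gens_mon_mem by blast
    then obtain k where "0 < Poly_Mapping.lookup g k" "var k \<in> P"
      using prime_ideal_mon_mem_imp_var[OF prime] by blast
    then show "Poly_Mapping.keys g \<inter> {k. var k \<in> P} \<noteq> {}" by (auto simp: in_keys_iff)
  qed
  moreover have "V = {k. var k \<in> P}" if V: "V \<subseteq> {k. var k \<in> P}" "cover I V" for V
  proof -
    have "var_ideal V = P"
    proof (rule minimal)
      show "prime_ideal (var_ideal V :: ('v, 'a) mpoly set)" by (rule prime_var_ideal)
      show "I \<subseteq> var_ideal V" by (rule subset_var_ideal_if_cover[OF I V(2)])
      show "var_ideal V \<subseteq> P"
        using prime V(1) unfolding prime_ideal_def by (intro var_ideal_subset) auto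
    qed
    then show ?thesis using V(1) var_mem_var_ideal_iff[of _ V] by blast
  qed
  ultimately show ?thesis unfolding min_cover_def by blast
qed

lemma mon_mem_loc_contr:
  fixes P :: "('v::finite, 'a::field) mpoly set"
  assumes P: "prime_ideal P" and J: "is_ideal J" and "mon g \<in> J"
    and exps: "\<And>k. var k \<in> P \<Longrightarrow> Poly_Mapping.lookup g k \<le> Poly_Mapping.lookup w k"
  shows "mon w \<in> loc_contr J P"
proof -
  have "mon (g - w) \<notin> P"
  proof
    assume "mon (g - w) \<in> P"
    then obtain k where "0 < Poly_Mapping.lookup (g - w) k" "var k \<in> P"
      using prime_ideal_mon_mem_imp_var[OF P] by blast
    then show False using exps by (simp add: lookup_minus)
  qed
  moreover have "mdvd g (g - w + w)" by (rule mdvdI) (simp add: lookup_add lookup_minus)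
  then have "mon (g - w + w) \<in> J" by (rule ideal_mon_dvd[OF J \<open>mon g \<in> J\<close>])
  then have "mon (g - w) * mon w \<in> J" by (simp add: mon_add)
  ultimately show ?thesis unfolding loc_contr_def by blast
qed

lemma mon_mem_loc_contr_square:
  fixes P :: "('v::finite, 'a::field) mpoly set"
  assumes P: "prime_ideal P" and g: "(mon g1 :: ('v, 'a) mpoly) \<in> I" "(mon g2 :: ('v, 'a) mpoly) \<in> I"
    and exps: "\<And>k. var k \<in> P \<Longrightarrow> Poly_Mapping.lookup g1 k + Poly_Mapping.lookup g2 k \<le> Poly_Mapping.lookup w k"
  shows "(mon w :: ('v, 'a) mpoly) \<in> loc_contr (ideal_prod I I) P"
proof (rule mon_mem_loc_contr[OF P])
  show "is_ideal (ideal_prod I I)" unfolding ideal_prod_def by (rule is_ideal_ideal_gen)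
  show "(mon (g1 + g2) :: ('v, 'a) mpoly) \<in> ideal_prod I I"
    unfolding mon_add by (rule ideal_prod_mem[OF g])
  show "Poly_Mapping.lookup (g1 + g2) k \<le> Poly_Mapping.lookup w k" if "var k \<in> P" for k
    using exps[OF that] by (simp add: lookup_add)
qed

lemma pure_power_component_eq_cover:
  fixes I :: "('v, 'a::field) mpoly set"
  assumes V: "min_cover I V" and sub: "I \<subseteq> pure_power_ideal A e" and e: "\<forall>k\<in>A. 1 \<le> e k"
    and notin: "(mon t :: ('v, 'a) mpoly) \<notin> pure_power_ideal A e"
    and large: "\<And>k. k \<in> A \<Longrightarrow> k \<notin> V \<Longrightarrow> e k \<le> Poly_Mapping.lookup t k"
  shows "A = V"
proof -
  have "A \<subseteq> V"
  proof
    fix k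
    assume "k \<in> A"
    show "k \<in> V"
    proof (rule ccontr)
      assume "k \<notin> V"
      then have "(mon t :: ('v, 'a) mpoly) \<in> pure_power_ideal A e"
        using large[OF \<open>k \<in> A\<close>] \<open>k \<in> A\<close> unfolding mon_mem_pure_power_ideal_iff by blast
      with notin show False by contradiction
    qed
  qed
  moreover have "cover I A"
    unfolding cover_def
  proof
    fix g
    assume "g \<in> min_gens I"
    then have "(mon g :: ('v, 'a) mpoly) \<in> pure_power_ideal A e" using sub min_gens_mon_mem by blast
    then obtain k where k: "k \<in> A" "e k \<le> Poly_Mapping.lookup g k" unfolding mon_mem_pure_power_ideal_iff by blast
    moreover have "1 \<le> e k" using e k(1) by blast
    ultimately have "k \<in> Poly_Mapping.keys g" by (simp add: in_keys_iff)
    then show "Poly_Mapping.keys g \<inter> A \<noteq> {}" using k(1) by blast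
  qed
  ultimately show ?thesis using V unfolding min_cover_def by simp
qed

lemma irred_decomp_obtain_exponents:
  fixes I :: "('v::finite, 'a::field) mpoly set"
  assumes D: "irred_decomp I D"
  obtains A e N where "\<And>Q. Q \<in> D \<Longrightarrow> Q = pure_power_ideal (A Q) (e Q)"
    and "\<And>Q k. Q \<in> D \<Longrightarrow> k \<in> A Q \<Longrightarrow> 1 \<le> e Q k" and "\<And>Q k. Q \<in> D \<Longrightarrow> e Q k \<le> N"
proof -
  have "\<exists>A e. Q = pure_power_ideal A e \<and> (\<forall>k\<in>A. 1 \<le> e k)" if "Q \<in> D" for Q
  proof -
    have "irreducible_monomial_ideal Q" using D that unfolding irred_decomp_def by blast
    then show ?thesis unfolding irreducible_monomial_ideal_iff by blast
  qed
  then obtain A e where Ae: "\<And>Q. Q \<in> D \<Longrightarrow> Q = pure_power_ideal (A Q) (e Q) \<and> (\<forall>k\<in>A Q. 1 \<le> e Q k)"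
    by metis
  have "finite (e ` D)" using D unfolding irred_decomp_def by simp
  then obtain N where bound: "\<And>Q k. Q \<in> D \<Longrightarrow> e Q k \<le> N"
    using finite_functions_bounded[of "e ` D"] by auto
  show ?thesis
  proof (rule that)
    show "Q = pure_power_ideal (A Q) (e Q)" if "Q \<in> D" for Q using Ae[OF that] by blast
    show "1 \<le> e Q k" if "Q \<in> D" "k \<in> A Q" for Q k using Ae[OF that(1)] that(2) by blast
    show "e Q k \<le> N" if "Q \<in> D" for Q k by (rule bound[OF that])
  qed
qed

lemma exists_component_of_min_cover:
  fixes I :: "('v::finite, 'a::field) mpoly set"
  assumes D: "irred_decomp I D" and V: "min_cover I V"
    and Q_eq: "\<And>Q. Q \<in> D \<Longrightarrow> Q = pure_power_ideal (A Q) (e Q)"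
    and e_pos: "\<And>Q k. Q \<in> D \<Longrightarrow> k \<in> A Q \<Longrightarrow> 1 \<le> e Q k"
    and e_le: "\<And>Q k. Q \<in> D \<Longrightarrow> e Q k \<le> N"
    and t: "(mon t :: ('v, 'a) mpoly) \<notin> I" and large: "\<And>k. k \<notin> V \<Longrightarrow> N \<le> Poly_Mapping.lookup t k"
  shows "\<exists>Q\<in>D. (mon t :: ('v, 'a) mpoly) \<notin> Q \<and> A Q = V"
proof -
  have I_eq: "I = \<Inter>D" using D unfolding irred_decomp_def by blast
  then obtain Q where Q: "Q \<in> D" "(mon t :: ('v, 'a) mpoly) \<notin> Q" using t by blast
  have "A Q = V"
  proof (rule pure_power_component_eq_cover[OF V])
    show "I \<subseteq> pure_power_ideal (A Q) (e Q)" using I_eq Q_eq[OF Q(1)] Q(1) by blast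
    show "\<forall>k\<in>A Q. 1 \<le> e Q k" using e_pos[OF Q(1)] by blast
    show "(mon t :: ('v, 'a) mpoly) \<notin> pure_power_ideal (A Q) (e Q)" using Q(2) Q_eq[OF Q(1)] by simp
    show "e Q k \<le> Poly_Mapping.lookup t k" if "k \<notin> V" for k
      using e_le[OF Q(1), of k] large[OF that] by simp
  qed
  with Q show ?thesis by blast
qed

lemma component_eq_if_same_support:
  assumes md: "minimal_irred_decomp I" and D: "irred_decomp I D" and "Q1 \<in> D" "Q2 \<in> D"
    and "Q1 = pure_power_ideal A e1" "Q2 = pure_power_ideal A e2"
    and "\<forall>k\<in>A. 1 \<le> e1 k" "\<forall>k\<in>A. 1 \<le> e2 k" and "finite A"
  shows "Q1 = Q2"
proof -
  have "radical Q1 = radical Q2" using assms(5-9) radical_pure_power_ideal_eq by simp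
  then show ?thesis using md D assms(3,4) unfolding minimal_irred_decomp_def by blast
qed

lemma obtain_min_cover_component:
  fixes I :: "('v::finite, 'a::field) mpoly set"
  assumes s2: "support2 I" and md: "minimal_irred_decomp I" and V: "min_cover I V"
    and ne: "min_gens I \<noteq> {}"
  obtains e N where "\<forall>k\<in>V. 1 \<le> e k" and "I \<subseteq> pure_power_ideal V e"
    and "\<And>t. (mon t :: ('v, 'a) mpoly) \<notin> I \<Longrightarrow> (\<And>k. k \<notin> V \<Longrightarrow> N \<le> Poly_Mapping.lookup t k) \<Longrightarrow>
      (mon t :: ('v, 'a) mpoly) \<notin> pure_power_ideal V e"
proof -
  have "monomial_ideal I" using s2 unfolding support2_def by blast
  then obtain D where D: "irred_decomp I D" using exists_irred_decomp finite_min_gens[OF s2] ne by blast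
  obtain A e N where Q_eq: "\<And>Q. Q \<in> D \<Longrightarrow> Q = pure_power_ideal (A Q) (e Q)"
    and e_pos: "\<And>Q k. Q \<in> D \<Longrightarrow> k \<in> A Q \<Longrightarrow> 1 \<le> e Q k"
    and e_le: "\<And>Q k. Q \<in> D \<Longrightarrow> e Q k \<le> N"
    using irred_decomp_obtain_exponents[OF D] by metis
  note component = exists_component_of_min_cover[OF D V Q_eq e_pos e_le]
  define t0 where "t0 = Abs_poly_mapping (\<lambda>k. if k \<in> V then 0 else N)"
  have lookup_t0: "Poly_Mapping.lookup t0 k = (if k \<in> V then 0 else N)" for k
    unfolding t0_def by simp
  have "(mon t0 :: ('v, 'a) mpoly) \<notin> I"
  proof
    assume "(mon t0 :: ('v, 'a) mpoly) \<in> I"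
    then obtain g where g: "g \<in> min_gens I" "mdvd g t0" using exists_min_gen_dvd by blast
    obtain k where "k \<in> Poly_Mapping.keys g" "k \<in> V" using V g(1) unfolding min_cover_def cover_def by blast
    then show False using mdvdD[OF g(2), of k] by (simp add: lookup_t0 in_keys_iff)
  qed
  then obtain Q0 where Q0: "Q0 \<in> D" "A Q0 = V" using component lookup_t0 by fastforce
  show ?thesis
  proof (rule that)
    show "\<forall>k\<in>V. 1 \<le> e Q0 k" using e_pos[OF Q0(1)] Q0(2) by blast
    have "I = \<Inter>D" using D unfolding irred_decomp_def by blast
    then show "I \<subseteq> pure_power_ideal V (e Q0)" using Q_eq[OF Q0(1)] Q0 by blast
    fix t
    assume "(mon t :: ('v, 'a) mpoly) \<notin> I" "\<And>k. k \<notin> V \<Longrightarrow> N \<le> Poly_Mapping.lookup t k"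
    then obtain Q where Q: "Q \<in> D" "(mon t :: ('v, 'a) mpoly) \<notin> Q" "A Q = V" using component by blast
    have QV: "Q = pure_power_ideal V (e Q)" "\<forall>k\<in>V. 1 \<le> e Q k"
      using Q_eq[OF Q(1)] e_pos[OF Q(1)] Q(3) by simp_all
    have Q0V: "Q0 = pure_power_ideal V (e Q0)" "\<forall>k\<in>V. 1 \<le> e Q0 k"
      using Q_eq[OF Q0(1)] e_pos[OF Q0(1)] Q0(2) by simp_all
    have "Q = Q0"
      by (rule component_eq_if_same_support[OF md D Q(1) Q0(1) QV(1) Q0V(1) QV(2) Q0V(2)]) simp
    then show "(mon t :: ('v, 'a) mpoly) \<notin> pure_power_ideal V (e Q0)" using Q Q_eq[OF Q0(1)] Q0(2) by simp
  qed
qed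

section \<open>Exit exponents and the staircase property\<close>

text \<open>If no minimal generator leaves \<open>V\<close> through \<open>x\<close>, the \<open>LEAST\<close> below is meaningless;
  \<open>exists_exit_gen\<close> excludes this for minimal covers containing \<open>x\<close>.\<close>
definition exit_exp :: "('v, 'a::field) mpoly set \<Rightarrow> 'v set \<Rightarrow> 'v \<Rightarrow> nat" where
  "exit_exp I V x =
    (LEAST n. \<exists>g\<in>min_gens I. \<exists>y. y \<notin> V \<and> Poly_Mapping.keys g = {x, y} \<and> Poly_Mapping.lookup g x = n)"

lemma exit_exp_le:
  "g \<in> min_gens I \<Longrightarrow> y \<notin> V \<Longrightarrow> Poly_Mapping.keys g = {x, y} \<Longrightarrow> exit_exp I V x \<le> Poly_Mapping.lookup g x"
  unfolding exit_exp_def by (rule Least_le) blast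

lemma exists_exit_gen:
  assumes "support2 I" and V: "min_cover I V" and "x \<in> V"
  shows "\<exists>g y. g \<in> min_gens I \<and> y \<notin> V \<and> Poly_Mapping.keys g = {x, y} \<and> Poly_Mapping.lookup g x = exit_exp I V x"
proof -
  have "\<not> cover I (V - {x})" using V \<open>x \<in> V\<close> unfolding min_cover_def by blast
  then obtain g where g: "g \<in> min_gens I" "Poly_Mapping.keys g \<inter> (V - {x}) = {}"
    unfolding cover_def by blast
  have "Poly_Mapping.keys g \<inter> V \<noteq> {}" using V g(1) unfolding min_cover_def cover_def by blast
  with g(2) have "x \<in> Poly_Mapping.keys g" by blast
  moreover obtain a b where "Poly_Mapping.keys g = {a, b}" "a \<noteq> b"
    using \<open>support2 I\<close> g(1) unfolding support2_def by blast
  ultimately obtain y where "y \<noteq> x" "Poly_Mapping.keys g = {x, y}" using doubleton_other by metis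
  with g have "y \<notin> V" by blast
  with g(1) \<open>Poly_Mapping.keys g = {x, y}\<close>
  have "\<exists>n. \<exists>g\<in>min_gens I. \<exists>y. y \<notin> V \<and> Poly_Mapping.keys g = {x, y} \<and> Poly_Mapping.lookup g x = n"
    by blast
  from LeastI_ex[OF this] show ?thesis unfolding exit_exp_def by blast
qed

lemma mon_notin_below_exit:
  fixes I :: "('v::finite, 'a::field) mpoly set"
  assumes s2: "support2 I" and cover: "cover I V" and "x \<in> V"
    and zero: "\<And>k. k \<in> V \<Longrightarrow> k \<noteq> x \<Longrightarrow> Poly_Mapping.lookup t k = 0"
    and below: "Poly_Mapping.lookup t x < exit_exp I V x"
  shows "mon t \<notin> I"
proof
  assume "mon t \<in> I"
  then obtain g where g: "g \<in> min_gens I" "mdvd g t" using exists_min_gen_dvd by blast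
  have in_V: "k = x" if "k \<in> Poly_Mapping.keys g" "k \<in> V" for k
    using zero[OF that(2)] mdvdD[OF g(2), of k] that(1) by (auto simp: in_keys_iff)
  obtain k where "k \<in> Poly_Mapping.keys g" "k \<in> V" using cover g(1) unfolding cover_def by blast
  then have "x \<in> Poly_Mapping.keys g" using in_V by blast
  moreover obtain a b where "Poly_Mapping.keys g = {a, b}" "a \<noteq> b"
    using s2 g(1) unfolding support2_def by blast
  ultimately obtain y where y: "y \<noteq> x" "Poly_Mapping.keys g = {x, y}" using doubleton_other by metis
  then have "y \<notin> V" using in_V by blast
  then have "exit_exp I V x \<le> Poly_Mapping.lookup g x" using exit_exp_le[OF g(1)] y(2) by blast
  then show False using below mdvdD[OF g(2), of x] by simp
qed

text \<open>The component of support \<open>V\<close> is unique, so its exponents dominate the exit exponents: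
  \<open>x\<^bsup>p-1\<^esup>\<close>, for \<open>p\<close> the exit exponent of \<open>x\<close>, times a high power of every variable outside
  \<open>V\<close>, is not in \<open>I\<close>.\<close>
lemma exists_exit_exp_le_lookup:
  fixes I :: "('v::finite, 'a::field) mpoly set"
  assumes s2: "support2 I" and md: "minimal_irred_decomp I" and V: "min_cover I V"
    and m: "m \<in> min_gens I"
  shows "\<exists>x\<in>Poly_Mapping.keys m \<inter> V. exit_exp I V x \<le> Poly_Mapping.lookup m x"
proof -
  have "min_gens I \<noteq> {}" using m by blast
  then obtain e N where e: "\<forall>k\<in>V. 1 \<le> e k" and I_sub: "I \<subseteq> pure_power_ideal V e"
    and avoid: "\<And>t. (mon t :: ('v, 'a) mpoly) \<notin> I \<Longrightarrow> (\<And>k. k \<notin> V \<Longrightarrow> N \<le> Poly_Mapping.lookup t k) \<Longrightarrow>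
      (mon t :: ('v, 'a) mpoly) \<notin> pure_power_ideal V e"
    using obtain_min_cover_component[OF s2 md V] by metis
  have exit_le: "exit_exp I V x \<le> e x" if x: "x \<in> V" for x
  proof (rule ccontr)
    assume less: "\<not> exit_exp I V x \<le> e x"
    define t where "t = Abs_poly_mapping (\<lambda>k. if k = x then e x else if k \<in> V then 0 else N)"
    have lookup_t: "Poly_Mapping.lookup t k = (if k = x then e x else if k \<in> V then 0 else N)" for k
      unfolding t_def by simp
    have cover: "cover I V" using V unfolding min_cover_def by blast
    have "(mon t :: ('v, 'a) mpoly) \<notin> I"
      by (rule mon_notin_below_exit[OF s2 cover x]) (use less in \<open>simp_all add: lookup_t\<close>)
    then have "(mon t :: ('v, 'a) mpoly) \<notin> pure_power_ideal V e"
      using x by (intro avoid) (auto simp: lookup_t)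
    moreover have "(mon t :: ('v, 'a) mpoly) \<in> pure_power_ideal V e"
      unfolding mon_mem_pure_power_ideal_iff using x by (auto simp: lookup_t)
    ultimately show False by contradiction
  qed
  have "(mon m :: ('v, 'a) mpoly) \<in> pure_power_ideal V e" using I_sub min_gens_mon_mem[OF m] by blast
  then obtain x where x: "x \<in> V" "e x \<le> Poly_Mapping.lookup m x"
    unfolding mon_mem_pure_power_ideal_iff by blast
  moreover have "1 \<le> e x" using e x(1) by blast
  ultimately have "x \<in> Poly_Mapping.keys m" by (simp add: in_keys_iff)
  with x exit_le show ?thesis by (meson IntI le_trans)
qed

lemma staircase:
  fixes I :: "('v::finite, 'a::field) mpoly set"
  assumes "support2 I" and "minimal_irred_decomp I" and "min_cover I V"
    and "m \<in> min_gens I" and "Poly_Mapping.keys m = {i, j}"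
  shows "exit_exp I V i \<le> Poly_Mapping.lookup m i \<or> exit_exp I V j \<le> Poly_Mapping.lookup m j"
proof -
  obtain x where "x \<in> {i, j}" "exit_exp I V x \<le> Poly_Mapping.lookup m x"
    using exists_exit_exp_le_lookup[OF assms(1-4)] assms(5) by blast
  then show ?thesis by blast
qed

section \<open>The witness\<close>

locale support2_pair =
  fixes I :: "('v::finite, 'a::field) mpoly set" and i j :: 'v
  assumes support2: "support2 I" and minimal: "minimal_irred_decomp I"
    and distinct: "i \<noteq> j" and two_gens: "2 \<le> alpha I i j"
begin

definition G :: "('v \<Rightarrow>\<^sub>0 nat) set" where
  "G = {g \<in> min_gens I. Poly_Mapping.keys g = {i, j}}"

lemma card_G: "2 \<le> card G"
  using two_gens unfolding alpha_def G_def by simp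

lemma G_lookup:
  assumes "g \<in> G"
  shows "1 \<le> Poly_Mapping.lookup g i" and "1 \<le> Poly_Mapping.lookup g j"
    and "k \<noteq> i \<Longrightarrow> k \<noteq> j \<Longrightarrow> Poly_Mapping.lookup g k = 0"
proof -
  have keys: "Poly_Mapping.keys g = {i, j}" using assms unfolding G_def by blast
  then have "i \<in> Poly_Mapping.keys g" "j \<in> Poly_Mapping.keys g" by simp_all
  then show "1 \<le> Poly_Mapping.lookup g i" "1 \<le> Poly_Mapping.lookup g j" by (simp_all add: in_keys_iff)
  show "k \<noteq> i \<Longrightarrow> k \<noteq> j \<Longrightarrow> Poly_Mapping.lookup g k = 0" using keys by (rule lookup_eq_0_if_notin_pair)
qed

lemma G_eq:
  assumes "g \<in> G" and "g' \<in> G"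
    and "Poly_Mapping.lookup g i \<le> Poly_Mapping.lookup g' i" and "Poly_Mapping.lookup g j \<le> Poly_Mapping.lookup g' j"
  shows "g = g'"
proof -
  have "g \<in> min_gens I" "g' \<in> min_gens I" "Poly_Mapping.keys g = {i, j}"
    using assms(1,2) unfolding G_def by simp_all
  then show ?thesis using assms(3,4) by (rule min_gens_pair_eq)
qed

definition m :: "'v \<Rightarrow>\<^sub>0 nat" where
  "m = arg_min (\<lambda>g. Poly_Mapping.lookup g j) (\<lambda>g. g \<in> G)"

abbreviation a :: nat where "a \<equiv> Poly_Mapping.lookup m i"
abbreviation b :: nat where "b \<equiv> Poly_Mapping.lookup m j"

lemma m_in_G: "m \<in> G" and m_least: "g \<in> G \<Longrightarrow> b \<le> Poly_Mapping.lookup g j"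
proof -
  have "G \<noteq> {}" using card_G by auto
  then obtain g0 where "g0 \<in> G" by blast
  from arg_min_nat_lemma[of "\<lambda>g. g \<in> G" g0 "\<lambda>g. Poly_Mapping.lookup g j", OF this]
  show "m \<in> G" "g \<in> G \<Longrightarrow> b \<le> Poly_Mapping.lookup g j"
    unfolding m_def by blast+
qed

lemma exists_G_lookup_less_a: "\<exists>g\<in>G. Poly_Mapping.lookup g i < a"
proof -
  have "G \<noteq> {m}" using card_G by auto
  then obtain g where g: "g \<in> G" "g \<noteq> m" using m_in_G by blast
  have "\<not> a \<le> Poly_Mapping.lookup g i"
    using G_eq[OF m_in_G g(1) _ m_least[OF g(1)]] g(2) by auto
  with g(1) show ?thesis by (auto simp: not_le)
qed

lemma G_eq_m:
  assumes "g \<in> G" and "Poly_Mapping.lookup g j \<le> b"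
  shows "g = m"
proof (cases "Poly_Mapping.lookup g i \<le> a")
  case True
  then show ?thesis using G_eq[OF assms(1) m_in_G _ assms(2)] by blast
next
  case False
  then show ?thesis using G_eq[OF m_in_G assms(1)] m_least[OF assms(1)] by simp
qed

lemma monomial_ideal: "monomial_ideal I"
  using support2 unfolding support2_def by blast

definition covers :: "'v set set" where
  "covers = {V. min_cover I V \<and> i \<in> V \<and> j \<in> V \<and> a \<le> exit_exp I V i}"

definition v :: nat where
  "v = Max (insert (2 * b) ((\<lambda>V. exit_exp I V j) ` covers))"

definition w :: "'v \<Rightarrow>\<^sub>0 nat" where
  "w = Poly_Mapping.single i (2 * a - 1) + Poly_Mapping.single j v"

lemma lookup_w:
  "Poly_Mapping.lookup w k = (if k = i then 2 * a - 1 else if k = j then v else 0)"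
  unfolding w_def using distinct by (auto simp: lookup_add lookup_single when_def)

lemma two_b_le_v: "2 * b \<le> v" and exit_exp_le_v: "V \<in> covers \<Longrightarrow> exit_exp I V j \<le> v"
  unfolding v_def by simp_all

lemma v_cases: "v = 2 * b \<or> (\<exists>V\<in>covers. v = exit_exp I V j)"
proof -
  have "v \<in> insert (2 * b) ((\<lambda>V. exit_exp I V j) ` covers)"
    unfolding v_def by (rule Max_in) simp_all
  then show ?thesis by blast
qed

lemma mem_G_if_dvd_w:
  assumes g: "g \<in> min_gens I" and "mdvd g w"
  shows "g \<in> G"
proof -
  have "k \<in> {i, j}" if "k \<in> Poly_Mapping.keys g" for k
    using that mdvdD[OF \<open>mdvd g w\<close>, of k] by (auto simp: lookup_w in_keys_iff split: if_splits)
  moreover obtain x y where "Poly_Mapping.keys g = {x, y}" "x \<noteq> y"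
    using support2 g unfolding support2_def by blast
  ultimately have "Poly_Mapping.keys g = {i, j}" by auto
  with g show ?thesis unfolding G_def by blast
qed

lemma mon_w_notin_square: "(mon w :: ('v, 'a) mpoly) \<notin> ideal_prod I I"
proof
  assume "(mon w :: ('v, 'a) mpoly) \<in> ideal_prod I I"
  then obtain g1 g2 where g: "g1 \<in> min_gens I" "g2 \<in> min_gens I" "mdvd (g1 + g2) w"
    using mon_mem_square_imp_min_gens_sum_dvd[OF monomial_ideal] by blast
  have "mdvd g1 (g1 + g2)" "mdvd g2 (g1 + g2)" by (auto intro!: mdvdI simp: lookup_add)
  then have "mdvd g1 w" "mdvd g2 w" using mdvd_trans g(3) by blast+
  then have G: "g1 \<in> G" "g2 \<in> G" using mem_G_if_dvd_w g by blast+
  have sum_i: "Poly_Mapping.lookup g1 i + Poly_Mapping.lookup g2 i \<le> 2 * a - 1"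
    and sum_j: "Poly_Mapping.lookup g1 j + Poly_Mapping.lookup g2 j \<le> v"
    using mdvdD[OF g(3), of i] mdvdD[OF g(3), of j] distinct by (simp_all add: lookup_add lookup_w)
  from v_cases show False
  proof
    assume "v = 2 * b"
    then have "Poly_Mapping.lookup g1 j \<le> b" "Poly_Mapping.lookup g2 j \<le> b"
      using sum_j m_least[OF G(1)] m_least[OF G(2)] by linarith+
    then have "g1 = m" "g2 = m" using G_eq_m G by blast+
    then show False using sum_i G_lookup(1)[OF m_in_G] by simp
  next
    assume "\<exists>V\<in>covers. v = exit_exp I V j"
    then obtain V where V: "min_cover I V" "i \<in> V" "j \<in> V" "a \<le> exit_exp I V i"
      and v: "v = exit_exp I V j" unfolding covers_def by blast
    have stair: "exit_exp I V i \<le> Poly_Mapping.lookup g i" if "g \<in> G" "Poly_Mapping.lookup g j < exit_exp I V j" for g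
    proof -
      have "g \<in> min_gens I" "Poly_Mapping.keys g = {i, j}" using that(1) unfolding G_def by simp_all
      from staircase[OF support2 minimal V(1) this] that(2) show ?thesis by simp
    qed
    have "Poly_Mapping.lookup g1 j < exit_exp I V j" "Poly_Mapping.lookup g2 j < exit_exp I V j"
      using sum_j v G_lookup(2)[OF G(1)] G_lookup(2)[OF G(2)] by linarith+
    then have "exit_exp I V i \<le> Poly_Mapping.lookup g1 i" "exit_exp I V i \<le> Poly_Mapping.lookup g2 i"
      using stair G by blast+
    then show False using sum_i V(4) G_lookup(1)[OF m_in_G] by linarith
  qed
qed

lemma square_gens_below_w_if_ij_mem:
  assumes V: "min_cover I V" and ij: "i \<in> V" "j \<in> V"
  shows "\<exists>g1\<in>min_gens I. \<exists>g2\<in>min_gens I. \<forall>k\<in>V.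
    Poly_Mapping.lookup g1 k + Poly_Mapping.lookup g2 k \<le> Poly_Mapping.lookup w k"
proof -
  have witness: "\<exists>g1\<in>min_gens I. \<exists>g2\<in>min_gens I. \<forall>k\<in>V.
      Poly_Mapping.lookup g1 k + Poly_Mapping.lookup g2 k \<le> Poly_Mapping.lookup w k"
    if "g1 \<in> min_gens I" "g2 \<in> min_gens I"
      "\<And>k. k \<in> V \<Longrightarrow> Poly_Mapping.lookup g1 k + Poly_Mapping.lookup g2 k \<le> Poly_Mapping.lookup w k"
    for g1 g2
    using that by blast
  obtain gp y where gp: "gp \<in> min_gens I" "y \<notin> V" "Poly_Mapping.keys gp = {i, y}"
    "Poly_Mapping.lookup gp i = exit_exp I V i"
    using exists_exit_gen[OF support2 V ij(1)] by blast
  obtain gs z where gs: "gs \<in> min_gens I" "z \<notin> V" "Poly_Mapping.keys gs = {j, z}"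
    "Poly_Mapping.lookup gs j = exit_exp I V j"
    using exists_exit_gen[OF support2 V ij(2)] by blast
  have gp_V: "Poly_Mapping.lookup gp k = (if k = i then exit_exp I V i else 0)" if "k \<in> V" for k
    using gp lookup_eq_0_if_notin_pair[OF gp(3), of k] that by auto
  have gs_V: "Poly_Mapping.lookup gs k = (if k = j then exit_exp I V j else 0)" if "k \<in> V" for k
    using gs lookup_eq_0_if_notin_pair[OF gs(3), of k] that by auto
  show ?thesis
  proof (cases "2 * exit_exp I V i \<le> 2 * a - 1")
    case True
    show ?thesis by (rule witness[OF gp(1) gp(1)]) (use True distinct in \<open>auto simp: gp_V lookup_w\<close>)
  next
    case False
    then have "V \<in> covers" using V ij unfolding covers_def by auto
    then have s_le_v: "exit_exp I V j \<le> v" by (rule exit_exp_le_v)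
    have "m \<in> min_gens I" "Poly_Mapping.keys m = {i, j}" using m_in_G unfolding G_def by simp_all
    then have "exit_exp I V i \<le> a \<or> exit_exp I V j \<le> b" by (rule staircase[OF support2 minimal V])
    then show ?thesis
    proof
      assume "exit_exp I V i \<le> a"
      then have p_le: "exit_exp I V i \<le> 2 * a - 1" by linarith
      show ?thesis
        by (rule witness[OF gp(1) gs(1)]) (use p_le s_le_v distinct in \<open>auto simp: gp_V gs_V lookup_w\<close>)
    next
      assume s_le: "exit_exp I V j \<le> b"
      show ?thesis
        by (rule witness[OF gs(1) gs(1)]) (use s_le two_b_le_v distinct in \<open>auto simp: gs_V lookup_w\<close>)
    qed
  qed
qed

lemma square_gens_below_w:
  assumes V: "min_cover I V"
  shows "\<exists>g1\<in>min_gens I. \<exists>g2\<in>min_gens I. \<forall>k\<in>V.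
    Poly_Mapping.lookup g1 k + Poly_Mapping.lookup g2 k \<le> Poly_Mapping.lookup w k"
proof -
  consider "i \<notin> V" | "j \<notin> V" | "i \<in> V" "j \<in> V" by blast
  then show ?thesis
  proof cases
    case 1
    have "m \<in> min_gens I" using m_in_G unfolding G_def by blast
    moreover have "\<forall>k\<in>V. Poly_Mapping.lookup m k + Poly_Mapping.lookup m k \<le> Poly_Mapping.lookup w k"
      using 1 two_b_le_v by (auto simp: lookup_w G_lookup(3)[OF m_in_G])
    ultimately show ?thesis by blast
  next
    case 2
    obtain g where g: "g \<in> G" "Poly_Mapping.lookup g i < a"
      using exists_G_lookup_less_a by blast
    have "g \<in> min_gens I" using g(1) unfolding G_def by blast
    moreover have "\<forall>k\<in>V. Poly_Mapping.lookup g k + Poly_Mapping.lookup g k \<le> Poly_Mapping.lookup w k"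
      using 2 g(2) by (auto simp: lookup_w G_lookup(3)[OF g(1)])
    ultimately show ?thesis by blast
  next
    case 3
    then show ?thesis by (rule square_gens_below_w_if_ij_mem[OF V])
  qed
qed

lemma mon_w_mem_loc_contr:
  assumes P: "P \<in> min_primes I"
  shows "(mon w :: ('v, 'a) mpoly) \<in> loc_contr (ideal_prod I I) P"
proof -
  have prime: "prime_ideal P" using P unfolding min_primes_def by blast
  have "min_cover I {k. (var k :: ('v, 'a) mpoly) \<in> P}"
    by (rule min_cover_if_min_prime[OF monomial_ideal P])
  then obtain g1 g2 where "g1 \<in> min_gens I" "g2 \<in> min_gens I"
    and "\<forall>k\<in>{k. (var k :: ('v, 'a) mpoly) \<in> P}.
      Poly_Mapping.lookup g1 k + Poly_Mapping.lookup g2 k \<le> Poly_Mapping.lookup w k"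
    using square_gens_below_w by blast
  then show ?thesis using mon_mem_loc_contr_square[OF prime min_gens_mon_mem min_gens_mon_mem] by blast
qed

end

theorem lemma2p2:
  fixes I :: "('v::finite, 'a::field) mpoly set"
  assumes "support2 I"
    and "minimal_irred_decomp I"
    and "\<exists>i j. i \<noteq> j \<and> alpha I i j \<ge> 2"
  shows "symbolic_power I 2 \<noteq> ideal_pow I 2"
proof -
  obtain i j where "i \<noteq> j" "2 \<le> alpha I i j" using assms(3) by blast
  then interpret support2_pair I i j using assms(1,2) by unfold_locales
  have square: "ideal_pow I 2 = ideal_prod I I"
    using ideal_pow_2 monomial_ideal_is_ideal[OF monomial_ideal] by blast
  have "(mon w :: ('v, 'a) mpoly) \<in> symbolic_power I 2"
    unfolding symbolic_power_def square using mon_w_mem_loc_contr by blast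
  moreover have "(mon w :: ('v, 'a) mpoly) \<notin> ideal_pow I 2"
    unfolding square by (rule mon_w_notin_square)
  ultimately show ?thesis by blast
qed

end
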